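(* On the shell $A_1=\{x\in\mathbb R^3:1<|x|<2\}$ with Euclidean metric $dr^2+r^2\tilde g$ ($\tilde g$ the round metric on $S^2$), let $q,Q$ be functions of $r$, $\tilde\alpha$ a one-form on $S^2$ and $\tilde\tau$ a trace-free symmetric $(0,2)$-tensor on $S^2$ (both independent of $r$). Then $\tau=2q\,\tilde\alpha\odot dr+Q\tilde\tau$ is a trace-free symmetric $(0,2)$-tensor on $A_1$, and $\mathrm{div}(\tau)=0$ holds if and only if $\widetilde{\mathrm{div}}\,\tilde\alpha=0$ and $(r^2q)'\tilde\alpha+Q\,\widetilde{\mathrm{div}}\,\tilde\tau=0$. Similarly, let $p,P$ be functions of $r$, $\tilde\eta$ a one-form on $S^2$ and $\tilde\sigma$ a trace-free symmetric $(0,2)$-tensor on $S^2$. Then $\sigma=2p\,\tilde\eta\odot dr+P\tilde\sigma$ is a trace-free symmetric $(0,2)$-tensor on $A_1$, and $L\sigma=0$ holds if $2r(rp)'\,\widetilde{\mathrm{div}}\,\tilde\eta+P\,\widetilde{\mathrm{div}}\,\widetilde{\mathrm{div}}\,\tilde\sigma=0$.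
   Context: $\mathrm{div}$ is the Euclidean divergence on $\mathbb R^3$, and $\widetilde{\mathrm{div}}$ is the divergence on tensors on $(S^2,\tilde g)$ (contraction of the covariant derivative). For one-forms $\alpha,\beta$, $(\alpha\odot\beta)_{ij}=\frac12(\alpha_i\beta_j+\alpha_j\beta_i)$. The linearized scalar curvature operator at the Euclidean metric is $L\sigma=\sum_{i,j}(\sigma_{ij,ij}-\sigma_{ii,jj})$ in Cartesian coordinates. Tensors on $S^2$ are pulled back to $A_1$ via $x\mapsto x/|x|$; $'$ denotes $d/dr$. *)

theory Defs
  imports "HOL-Analysis.Analysis"
begin

definition pd :: "3 \<Rightarrow> (real^3 \<Rightarrow> real) \<Rightarrow> real^3 \<Rightarrow> real" where
  "pd i f x = deriv (\<lambda>t. f (x + t *\<^sub>R axis i 1)) 0"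

inductive_set partials_of :: "(real^3 \<Rightarrow> real) \<Rightarrow> (real^3 \<Rightarrow> real) set" for f where
  self: "f \<in> partials_of f"
| step: "g \<in> partials_of f \<Longrightarrow> pd i g \<in> partials_of f"

definition smooth3 :: "(real^3) set \<Rightarrow> (real^3 \<Rightarrow> real) \<Rightarrow> bool" where
  "smooth3 S f \<longleftrightarrow> (\<forall>g\<in>partials_of f. g differentiable_on S)"

definition smooth1 :: "real set \<Rightarrow> (real \<Rightarrow> real) \<Rightarrow> bool" where
  "smooth1 S f \<longleftrightarrow> (\<forall>k. ((deriv ^^ k) f) differentiable_on S)"

definition A1 :: "(real^3) set" where
  "A1 = {x. 1 < norm x \<and> norm x < 2}"

definition div_euc :: "(real^3 \<Rightarrow> real^3^3) \<Rightarrow> real^3 \<Rightarrow> real^3" where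
  "div_euc T x = (\<chi> j. \<Sum>i\<in>UNIV. pd i (\<lambda>y. T y $ i $ j) x)"

text \<open>Linearized scalar curvature operator at the Euclidean metric.\<close>
definition Lop :: "(real^3 \<Rightarrow> real^3^3) \<Rightarrow> real^3 \<Rightarrow> real" where
  "Lop S x = (\<Sum>i\<in>UNIV. \<Sum>j\<in>UNIV.
      pd j (pd i (\<lambda>y. S y $ i $ j)) x - pd j (pd j (\<lambda>y. S y $ i $ i)) x)"

definition odot :: "real^3 \<Rightarrow> real^3 \<Rightarrow> real^3^3" where
  "odot u v = (\<chi> i j. (u $ i * v $ j + u $ j * v $ i) / 2)"

definition tr3 :: "real^3^3 \<Rightarrow> real" where
  "tr3 M = (\<Sum>i\<in>UNIV. M $ i $ i)"

definition symmetric3 :: "real^3^3 \<Rightarrow> bool" where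
  "symmetric3 M \<longleftrightarrow> (\<forall>i j. M $ i $ j = M $ j $ i)"

text \<open>A tensor field on S^2 is given by its ambient Cartesian components at the points
  of the unit sphere (values off the sphere are irrelevant): a one-form is
  a :: real^3 => real^3 with a w . w = 0 for |w| = 1; a (0,2)-tensor is t :: real^3 => real^3^3
  annihilating w in both slots.  Only the values on the unit sphere are used, via the
  0-homogeneous extension.\<close>

definition ext0 :: "(real^3 \<Rightarrow> 'a) \<Rightarrow> real^3 \<Rightarrow> 'a" where
  "ext0 f x = f (x /\<^sub>R norm x)"

definition on_sphere :: "real^3 \<Rightarrow> bool" where
  "on_sphere w \<longleftrightarrow> norm w = 1"

text \<open>Tangential projection P = I - w w^T (the round metric of S^2 as an ambient tensor).\<close>
definition proj :: "real^3 \<Rightarrow> 3 \<Rightarrow> 3 \<Rightarrow> real" where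
  "proj w k l = (if k = l then 1 else 0) - w $ k * w $ l"

definition tangent1 :: "(real^3 \<Rightarrow> real^3) \<Rightarrow> bool" where
  "tangent1 a \<longleftrightarrow> (\<forall>w. on_sphere w \<longrightarrow> a w \<bullet> w = 0)"

definition tangent2 :: "(real^3 \<Rightarrow> real^3^3) \<Rightarrow> bool" where
  "tangent2 t \<longleftrightarrow> (\<forall>w. on_sphere w \<longrightarrow> t w *v w = 0 \<and> w v* t w = 0)"

definition smooth_S2_1 :: "(real^3 \<Rightarrow> real^3) \<Rightarrow> bool" where
  "smooth_S2_1 a \<longleftrightarrow> (\<forall>i. smooth3 (- {0}) (\<lambda>x. ext0 a x $ i))"

definition smooth_S2_2 :: "(real^3 \<Rightarrow> real^3^3) \<Rightarrow> bool" where
  "smooth_S2_2 t \<longleftrightarrow> (\<forall>i j. smooth3 (- {0}) (\<lambda>x. ext0 t x $ i $ j))"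

definition tfs_S2 :: "(real^3 \<Rightarrow> real^3^3) \<Rightarrow> bool" where
  "tfs_S2 t \<longleftrightarrow> tangent2 t \<and> smooth_S2_2 t \<and>
     (\<forall>w. on_sphere w \<longrightarrow> symmetric3 (t w) \<and> tr3 (t w) = 0)"

definition oneform_S2 :: "(real^3 \<Rightarrow> real^3) \<Rightarrow> bool" where
  "oneform_S2 a \<longleftrightarrow> tangent1 a \<and> smooth_S2_1 a"

text \<open>Divergence on (S^2, round metric): contraction of the Levi-Civita covariant derivative,
  the latter computed as the tangential projection of the ambient derivative
  (Gauss formula for the embedded unit sphere).\<close>
definition sdiv1 :: "(real^3 \<Rightarrow> real^3) \<Rightarrow> real^3 \<Rightarrow> real" where
  "sdiv1 a w = (\<Sum>k\<in>UNIV. \<Sum>l\<in>UNIV. proj w k l * pd k (\<lambda>y. ext0 a y $ l) w)"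

definition sdiv2 :: "(real^3 \<Rightarrow> real^3^3) \<Rightarrow> real^3 \<Rightarrow> real^3" where
  "sdiv2 t w = (\<chi> j. \<Sum>m\<in>UNIV. proj w j m *
      (\<Sum>i\<in>UNIV. \<Sum>k\<in>UNIV. proj w i k * pd k (\<lambda>y. ext0 t y $ i $ m) w))"

definition dr :: "real^3 \<Rightarrow> real^3" where
  "dr x = x /\<^sub>R norm x"

definition pb1 :: "(real^3 \<Rightarrow> real^3) \<Rightarrow> real^3 \<Rightarrow> real^3" where
  "pb1 a x = (1 / norm x) *\<^sub>R a (x /\<^sub>R norm x)"

definition pb2 :: "(real^3 \<Rightarrow> real^3^3) \<Rightarrow> real^3 \<Rightarrow> real^3^3" where
  "pb2 t x = (1 / (norm x)\<^sup>2) *\<^sub>R t (x /\<^sub>R norm x)"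

definition mk_tensor :: "(real \<Rightarrow> real) \<Rightarrow> (real^3 \<Rightarrow> real^3) \<Rightarrow> (real \<Rightarrow> real)
    \<Rightarrow> (real^3 \<Rightarrow> real^3^3) \<Rightarrow> real^3 \<Rightarrow> real^3^3" where
  "mk_tensor q a Q t x = (2 * q (norm x)) *\<^sub>R odot (pb1 a x) (dr x) + Q (norm x) *\<^sub>R pb2 t x"

end

theory Submission
  imports Defs
begin

text \<open>
  A field on the sphere enters through its
  extension \<open>ext0\<close>, which is homogeneous of degree zero, so Euler's relation kills its radial
  derivative: the divergences on \<open>S\<^sup>2\<close> become Euclidean divergences on the unit sphere, scaled
  by \<open>1/r\<close> at radius \<open>r\<close> (for a tangent tensor the normal component of the divergence is minus
  its trace, hence zero). The columns of \<open>2 q \<alpha> \<odot> dr + Q \<tau>\<close> are radial functions times such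
  fields and the position vector, and the product rule gives
  \<open>div = ((r\<^sup>2 q)'/r\<^sup>3) \<alpha> + (q/r\<^sup>2) (div\<^sub>S \<alpha>) dr + (Q/r\<^sup>3) div\<^sub>S \<tau>\<close>.
  Its normal and tangential parts give the equivalence; one radius with \<open>q \<noteq> 0\<close> already
  forces \<open>div\<^sub>S \<alpha> = 0\<close>. For trace-free \<open>\<sigma>\<close> one has \<open>L \<sigma> = div (div \<sigma>)\<close>, and the same
  computation applied to this polar form of \<open>div \<sigma>\<close> yields
  \<open>r\<^sup>4 L \<sigma> = 2 r (r p)' div\<^sub>S \<eta> + P div\<^sub>S div\<^sub>S \<sigma>\<close>.
\<close>

lemma pd_has_derivative:
  assumes "(f has_derivative f') (at x)"
  shows "pd k f x = f' (axis k 1)"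
proof -
  have "((\<lambda>t. x + t *\<^sub>R axis k 1) has_derivative (\<lambda>t. t *\<^sub>R axis k 1)) (at 0)"
    by (auto intro!: derivative_eq_intros)
  then have "((\<lambda>t. f (x + t *\<^sub>R axis k 1)) has_derivative (\<lambda>t. f' (t *\<^sub>R axis k 1))) (at 0)"
    using has_derivative_compose[of "\<lambda>t. x + t *\<^sub>R axis k 1" _ 0 UNIV f f'] assms by simp
  moreover have "(\<lambda>t. f' (t *\<^sub>R axis k 1)) = (\<lambda>t. f' (axis k 1) * t)"
    using linear_cmul[OF has_derivative_linear[OF assms]] by (auto simp: mult.commute)
  ultimately show ?thesis
    unfolding pd_def by (intro DERIV_imp_deriv) (simp add: has_field_derivative_def)
qed

lemma pd_frechet_derivative:
  assumes "f differentiable (at x)"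
  shows "pd k f x = frechet_derivative f (at x) (axis k 1)"
  using assms by (simp add: frechet_derivative_works pd_has_derivative)

lemma pd_eventually_cong:
  assumes "\<forall>\<^sub>F y in nhds x. f y = g y"
  shows "pd k f x = pd k g x"
  unfolding pd_def
proof (rule deriv_cong_ev)
  obtain S where S: "open S" "x \<in> S" "\<And>y. y \<in> S \<Longrightarrow> f y = g y"
    using assms unfolding eventually_nhds by blast
  let ?U = "(\<lambda>t::real. x + t *\<^sub>R axis k 1) -` S"
  have "open ?U" by (rule open_vimage[OF S(1)]) (intro continuous_intros)
  moreover have "0 \<in> ?U" using S(2) by simp
  ultimately show "\<forall>\<^sub>F t in nhds 0. f (x + t *\<^sub>R axis k 1) = g (x + t *\<^sub>R axis k 1)"
    unfolding eventually_nhds using S(3) by blast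
qed simp

lemma pd_const [simp]: "pd k (\<lambda>_. c) x = 0"
  by (simp add: pd_def)

lemma pd_coord: "pd k (\<lambda>y. y $ j) x = (if k = j then 1 else 0)"
  by (subst pd_has_derivative[OF bounded_linear_imp_has_derivative[OF bounded_linear_vec_nth]])
     (simp add: axis_def)

lemma differentiable_vec_nth [simp]: "(\<lambda>y. y $ j) differentiable (at x)"
  by (rule bounded_linear_imp_differentiable[OF bounded_linear_vec_nth])

lemma pd_add:
  assumes "f differentiable (at x)" "g differentiable (at x)"
  shows "pd k (\<lambda>y. f y + g y) x = pd k f x + pd k g x"
proof -
  have "((\<lambda>y. f y + g y) has_derivative
      (\<lambda>h. frechet_derivative f (at x) h + frechet_derivative g (at x) h)) (at x)"
    using assms by (intro has_derivative_add) (auto simp: frechet_derivative_works)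
  then show ?thesis
    using assms by (simp add: pd_has_derivative pd_frechet_derivative)
qed

lemma pd_mult:
  assumes "f differentiable (at x)" "g differentiable (at x)"
  shows "pd k (\<lambda>y. f y * g y) x = pd k f x * g x + f x * pd k g x"
proof -
  have "((\<lambda>y. f y * g y) has_derivative
      (\<lambda>h. f x * frechet_derivative g (at x) h + frechet_derivative f (at x) h * g x)) (at x)"
    using assms by (intro has_derivative_mult) (auto simp: frechet_derivative_works)
  then show ?thesis
    using assms by (simp add: pd_has_derivative pd_frechet_derivative)
qed

lemma pd_sum:
  assumes "\<And>i. i \<in> I \<Longrightarrow> f i differentiable (at x)" "finite I"
  shows "pd k (\<lambda>y. \<Sum>i\<in>I. f i y) x = (\<Sum>i\<in>I. pd k (f i) x)"
proof -
  have "((\<lambda>y. \<Sum>i\<in>I. f i y) has_derivative (\<lambda>h. \<Sum>i\<in>I. frechet_derivative (f i) (at x) h)) (at x)"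
    using assms by (intro has_derivative_sum) (auto simp: frechet_derivative_works)
  then show ?thesis
    using assms by (simp add: pd_has_derivative pd_frechet_derivative)
qed

lemma pd_radial:
  fixes f :: "real \<Rightarrow> real" and x :: "real^3"
  assumes "f differentiable (at (norm x))" "x \<noteq> 0"
  shows "pd k (\<lambda>y. f (norm y)) x = deriv f (norm x) * x $ k / norm x"
    and "(\<lambda>y. f (norm y)) differentiable (at x)"
proof -
  have "((\<lambda>y. f (norm y)) has_derivative (\<lambda>h. deriv f (norm x) * (h \<bullet> sgn x))) (at x)"
    using has_derivative_compose[OF has_derivative_norm[OF assms(2)]
        assms(1)[folded DERIV_deriv_iff_real_differentiable, unfolded has_field_derivative_def]]
    by simp
  then show "pd k (\<lambda>y. f (norm y)) x = deriv f (norm x) * x $ k / norm x"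
    and "(\<lambda>y. f (norm y)) differentiable (at x)"
    by (auto simp: pd_has_derivative inner_axis' sgn_div_norm differentiable_def field_simps)
qed

lemma differentiable_vec_iff:
  fixes f :: "'a::real_normed_vector \<Rightarrow> 'b::euclidean_space^'n"
  shows "f differentiable (at x) \<longleftrightarrow> (\<forall>i. (\<lambda>y. f y $ i) differentiable (at x))"
proof
  assume "f differentiable (at x)"
  then show "\<forall>i. (\<lambda>y. f y $ i) differentiable (at x)"
    using differentiable_compose[OF bounded_linear_imp_differentiable[OF bounded_linear_vec_nth]]
    by blast
next
  assume "\<forall>i. (\<lambda>y. f y $ i) differentiable (at x)"
  then obtain D where D: "\<And>i. ((\<lambda>y. f y $ i) has_derivative D i) (at x)"
    unfolding differentiable_def by metis
  have "(f has_derivative (\<lambda>h. \<chi> i. D i h)) (at x)"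
  proof (subst has_derivative_componentwise_within, intro ballI)
    fix b :: "'b^'n" assume "b \<in> Basis"
    then obtain i u where b: "b = axis i u" by (auto simp: Basis_vec_def)
    show "((\<lambda>y. f y \<bullet> b) has_derivative (\<lambda>h. (\<chi> i. D i h) \<bullet> b)) (at x)"
      unfolding b inner_axis using D[of i] by (auto intro!: derivative_eq_intros)
  qed
  then show "f differentiable (at x)"
    unfolding differentiable_def by blast
qed

lemma linear_eq_sum_axis:
  fixes L :: "real^'n \<Rightarrow> 'a::real_vector"
  assumes "linear L"
  shows "L v = (\<Sum>k\<in>UNIV. v $ k *\<^sub>R L (axis k 1))"
proof -
  have "v = (\<Sum>k\<in>UNIV. v $ k *\<^sub>R axis k 1)"
    by (simp add: vec_eq_iff axis_def if_distrib cong: if_cong)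
  then have "L v = L (\<Sum>k\<in>UNIV. v $ k *\<^sub>R axis k 1)" by simp
  also have "\<dots> = (\<Sum>k\<in>UNIV. v $ k *\<^sub>R L (axis k 1))"
    using assms by (simp add: linear_sum linear_scale)
  finally show ?thesis .
qed

definition vdiv :: "(real^3 \<Rightarrow> real^3) \<Rightarrow> real^3 \<Rightarrow> real" where
  "vdiv V x = (\<Sum>i\<in>UNIV. pd i (\<lambda>y. V y $ i) x)"

lemma div_euc_eq_vdiv_column: "div_euc T x $ j = vdiv (\<lambda>y. column j (T y)) x"
  by (simp add: div_euc_def vdiv_def column_def)

lemma vdiv_add:
  assumes "V differentiable (at x)" "W differentiable (at x)"
  shows "vdiv (\<lambda>y. V y + W y) x = vdiv V x + vdiv W x"
  using assms by (simp add: vdiv_def pd_add differentiable_vec_iff sum.distrib)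

lemma vdiv_scaleR:
  assumes "g differentiable (at x)" "V differentiable (at x)"
  shows "vdiv (\<lambda>y. g y *\<^sub>R V y) x = (\<Sum>i\<in>UNIV. pd i g x * V x $ i) + g x * vdiv V x"
  using assms
  by (simp add: vdiv_def pd_mult differentiable_vec_iff sum.distrib sum_distrib_left)

lemma vdiv_id [simp]: "vdiv (\<lambda>y. y) x = 3"
  by (simp add: vdiv_def pd_coord)

lemma vdiv_eventually_cong:
  assumes "\<forall>\<^sub>F y in nhds x. V y = W y"
  shows "vdiv V x = vdiv W x"
proof -
  have "\<forall>\<^sub>F y in nhds x. V y $ i = W y $ i" for i
    using assms by eventually_elim simp
  then have "pd i (\<lambda>y. V y $ i) x = pd i (\<lambda>y. W y $ i) x" for i
    by (rule pd_eventually_cong)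
  then show ?thesis
    unfolding vdiv_def by simp
qed

lemma vdiv_radial_scaleR:
  fixes f :: "real \<Rightarrow> real"
  assumes "f differentiable (at (norm x))" "x \<noteq> 0" "V differentiable (at x)"
  shows "vdiv (\<lambda>y. f (norm y) *\<^sub>R V y) x
    = deriv f (norm x) * (V x \<bullet> x) / norm x + f (norm x) * vdiv V x"
  using assms
  by (simp add: vdiv_scaleR pd_radial inner_vec_def sum_divide_distrib sum_distrib_left
      algebra_simps)

subsection \<open>Fields homogeneous of degree zero\<close>

definition zero_homogeneous :: "(real^3 \<Rightarrow> 'a) \<Rightarrow> bool" where
  "zero_homogeneous f \<longleftrightarrow> (\<forall>c y. c > 0 \<longrightarrow> f (c *\<^sub>R y) = f y)"

lemma zero_homogeneous_ext0: "zero_homogeneous (ext0 f)"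
  by (simp add: zero_homogeneous_def ext0_def divide_simps)

lemma zero_homogeneous_comp: "zero_homogeneous f \<Longrightarrow> zero_homogeneous (\<lambda>y. F (f y))"
  by (simp add: zero_homogeneous_def)

lemma zero_homogeneous_has_derivative_scale:
  assumes "zero_homogeneous f" "(f has_derivative D) (at w)" "c > 0"
  shows "(f has_derivative (\<lambda>h. D (h /\<^sub>R c))) (at (c *\<^sub>R w))"
proof -
  have "((\<lambda>y. y /\<^sub>R c) has_derivative (\<lambda>h. h /\<^sub>R c)) (at (c *\<^sub>R w))"
    by (auto intro!: derivative_eq_intros)
  then have "((\<lambda>y. f (y /\<^sub>R c)) has_derivative (\<lambda>h. D (h /\<^sub>R c))) (at (c *\<^sub>R w))"
    using has_derivative_compose[of "\<lambda>y. y /\<^sub>R c" _ "c *\<^sub>R w" UNIV f D] assms(2,3) by simp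
  moreover have "f (y /\<^sub>R c) = f y" for y
  proof -
    have "f (c *\<^sub>R (y /\<^sub>R c)) = f (y /\<^sub>R c)"
      using assms(1,3) unfolding zero_homogeneous_def by blast
    then show ?thesis using assms(3) by simp
  qed
  ultimately show ?thesis by simp
qed

lemma zero_homogeneous_euler:
  assumes "zero_homogeneous g" "g differentiable (at x)"
  shows "(\<Sum>k\<in>UNIV. x $ k * pd k g x) = 0"
proof -
  obtain D where D: "(g has_derivative D) (at x)"
    using assms(2) unfolding differentiable_def by blast
  have "((\<lambda>t. g (x + t *\<^sub>R x)) has_field_derivative D x) (at 0)"
  proof -
    have "((\<lambda>t. x + t *\<^sub>R x) has_derivative (\<lambda>t. t *\<^sub>R x)) (at 0)"
      by (auto intro!: derivative_eq_intros)
    then have "((\<lambda>t. g (x + t *\<^sub>R x)) has_derivative (\<lambda>t. D (t *\<^sub>R x))) (at 0)"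
      using has_derivative_compose[of "\<lambda>t. x + t *\<^sub>R x" _ 0 UNIV g D] D by simp
    moreover have "(\<lambda>t. D (t *\<^sub>R x)) = (\<lambda>t. D x * t)"
      using linear_cmul[OF has_derivative_linear[OF D]] by (auto simp: mult.commute)
    ultimately show ?thesis by (simp add: has_field_derivative_def)
  qed
  moreover have "((\<lambda>t. g (x + t *\<^sub>R x)) has_field_derivative 0) (at 0)"
  proof (rule DERIV_cong_ev[THEN iffD1, OF refl _ refl])
    have "\<forall>\<^sub>F t in nhds (0::real). t > -1"
      using eventually_nhds_in_open[of "{-1<..}" "0::real"] by simp
    then show "\<forall>\<^sub>F t in nhds 0. g x = g (x + t *\<^sub>R x)"
    proof eventually_elim
      case (elim t)
      have "x + t *\<^sub>R x = (1 + t) *\<^sub>R x" by (simp add: algebra_simps)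
      then show ?case using assms(1) elim by (simp add: zero_homogeneous_def)
    qed
  qed simp
  ultimately have "D x = 0" by (rule DERIV_unique)
  have "(\<Sum>k\<in>UNIV. x $ k * D (axis k 1)) = D x"
    using linear_eq_sum_axis[OF has_derivative_linear[OF D], of x, symmetric]
    by (simp only: real_scaleR_def)
  also have "\<dots> = 0" by fact
  finally show ?thesis by (simp only: pd_has_derivative[OF D])
qed

lemma zero_homogeneous_differentiable_scale:
  assumes "zero_homogeneous f" "f differentiable (at w)" "c > 0"
  shows "f differentiable (at (c *\<^sub>R w))"
  using zero_homogeneous_has_derivative_scale[OF assms(1) _ assms(3)] assms(2)
  unfolding differentiable_def by blast

lemma ext0_differentiable_from_sphere:
  assumes "ext0 f differentiable (at (x /\<^sub>R norm x))" "x \<noteq> 0"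
  shows "ext0 f differentiable (at x)"
  using zero_homogeneous_differentiable_scale[OF zero_homogeneous_ext0 assms(1), of "norm x"] assms(2)
  by simp

lemma zero_homogeneous_pd_scale:
  assumes "zero_homogeneous g" "g differentiable (at w)" "c > 0"
  shows "pd k g (c *\<^sub>R w) = pd k g w / c"
proof -
  obtain D where D: "(g has_derivative D) (at w)"
    using assms(2) unfolding differentiable_def by blast
  note D' = zero_homogeneous_has_derivative_scale[OF assms(1) D assms(3)]
  have "pd k g (c *\<^sub>R w) = D (inverse c *\<^sub>R axis k 1)"
    by (simp add: pd_has_derivative[OF D'])
  also have "\<dots> = pd k g w / c"
    using linear_scale[OF has_derivative_linear[OF D]]
    by (simp add: pd_has_derivative[OF D] divide_inverse_commute)
  finally show ?thesis .
qed

lemma vdiv_zero_homogeneous_scale: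
  assumes "zero_homogeneous V" "V differentiable (at w)" "c > 0"
  shows "vdiv V (c *\<^sub>R w) = vdiv V w / c"
proof -
  have "pd i (\<lambda>y. V y $ i) (c *\<^sub>R w) = pd i (\<lambda>y. V y $ i) w / c" for i
    using assms(2) zero_homogeneous_comp[OF assms(1), of "\<lambda>v. v $ i"]
    by (intro zero_homogeneous_pd_scale assms(3)) (simp_all add: differentiable_vec_iff)
  then show ?thesis by (simp add: vdiv_def sum_divide_distrib)
qed

lemma vdiv_zero_homogeneous_scaleR_id:
  assumes "zero_homogeneous s" "s differentiable (at x)"
  shows "vdiv (\<lambda>y. s y *\<^sub>R y) x = 3 * s x"
  using vdiv_scaleR[OF assms(2), of "\<lambda>y. y"] zero_homogeneous_euler[OF assms]
  by (simp add: ac_simps)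

subsection \<open>Divergences on the sphere as Euclidean divergences\<close>

lemma proj_sym: "proj w k l = proj w l k"
  by (simp add: proj_def mult.commute)

lemma sum_proj_mult: "(\<Sum>m\<in>UNIV. proj w j m * D m) = D j - w $ j * (\<Sum>m\<in>UNIV. w $ m * D m)"
  by (simp add: proj_def left_diff_distrib sum_subtractf sum_distrib_left mult.assoc
      of_bool_def[symmetric])

lemma sum_proj_pd_zero_homogeneous:
  assumes "zero_homogeneous g" "g differentiable (at w)"
  shows "(\<Sum>k\<in>UNIV. proj w i k * pd k g w) = pd i g w"
  using zero_homogeneous_euler[OF assms] by (simp add: sum_proj_mult)

lemma sdiv1_eq_vdiv:
  assumes "ext0 a differentiable (at w)"
  shows "sdiv1 a w = vdiv (ext0 a) w"
proof -
  have "(\<Sum>k\<in>UNIV. proj w l k * pd k (\<lambda>y. ext0 a y $ l) w) = pd l (\<lambda>y. ext0 a y $ l) w" for l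
    using assms zero_homogeneous_comp[OF zero_homogeneous_ext0, of "\<lambda>v. v $ l" a]
    by (intro sum_proj_pd_zero_homogeneous) (simp_all add: differentiable_vec_iff)
  then show ?thesis
    unfolding sdiv1_def vdiv_def by (subst sum.swap) (simp add: proj_sym)
qed

lemma tangent1_ext0_inner:
  assumes "tangent1 a" "y \<noteq> 0"
  shows "ext0 a y \<bullet> y = 0"
proof -
  have "norm (y /\<^sub>R norm y) = 1"
    using assms(2) by simp
  then have "a (y /\<^sub>R norm y) \<bullet> (y /\<^sub>R norm y) = 0"
    using assms(1) unfolding tangent1_def on_sphere_def by blast
  then show ?thesis
    using assms(2) by (simp add: ext0_def)
qed

lemma tangent2_ext0_row:
  assumes "tangent2 t" "y \<noteq> 0"
  shows "ext0 t y *v y = 0"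
proof -
  let ?w = "y /\<^sub>R norm y"
  have "t ?w *v ?w = 0"
    using assms unfolding tangent2_def on_sphere_def by simp
  then have "t ?w *v (norm y *\<^sub>R ?w) = 0"
    by (simp add: linear_scale[OF matrix_vector_mul_linear])
  then show ?thesis
    using assms(2) by (simp add: ext0_def)
qed

lemma tangent2_ext0_column:
  assumes "tangent2 t" "y \<noteq> 0"
  shows "column j (ext0 t y) \<bullet> y = 0"
proof -
  let ?w = "y /\<^sub>R norm y"
  have "?w v* t ?w = 0"
    using assms unfolding tangent2_def on_sphere_def by simp
  then have "(norm y *\<^sub>R ?w) v* t ?w = 0"
    by (simp add: scaleR_vector_matrix_assoc)
  then have "(y v* ext0 t y) $ j = 0"
    using assms(2) by (simp add: ext0_def)
  then show ?thesis
    by (simp add: vector_matrix_mult_def column_def inner_vec_def mult.commute)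
qed

lemma ext0_on_sphere: "on_sphere w \<Longrightarrow> ext0 f w = f w"
  by (simp add: ext0_def on_sphere_def)

lemma normal_vdiv_columns_tangent2:
  assumes t: "tangent2 t" and w: "on_sphere w" and dt: "ext0 t differentiable (at w)"
  shows "(\<Sum>m\<in>UNIV. w $ m * vdiv (\<lambda>y. column m (ext0 t y)) w) = - tr3 (t w)"
proof -
  \<comment> \<open>differentiate the tangency relation \<open>B(y) y = 0\<close> and take the trace\<close>
  have dB: "(\<lambda>y. ext0 t y $ i $ m) differentiable (at w)" for i m
    using dt by (simp add: differentiable_vec_iff)
  have "w \<noteq> 0" using w by (auto simp: on_sphere_def)
  have "\<forall>\<^sub>F y in nhds w. (ext0 t y *v y) $ i = 0" for i
    using t1_space_nhds[OF \<open>w \<noteq> 0\<close>] by eventually_elim (simp add: tangent2_ext0_row[OF t])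
  then have "pd i (\<lambda>y. (ext0 t y *v y) $ i) w = 0" for i
    by (simp add: pd_eventually_cong[where g="\<lambda>_. 0"])
  moreover have "pd i (\<lambda>y. (ext0 t y *v y) $ i) w
      = (\<Sum>m\<in>UNIV. pd i (\<lambda>y. ext0 t y $ i $ m) w * w $ m) + t w $ i $ i" for i
  proof -
    have "(\<lambda>y. ext0 t y $ i $ m * y $ m) differentiable (at w)" for m
      using dB by simp
    then show ?thesis
      using dB by (simp add: matrix_vector_mult_def pd_sum pd_mult pd_coord ext0_on_sphere[OF w]
          of_bool_def[symmetric] sum.distrib)
  qed
  ultimately have "(\<Sum>i\<in>UNIV. (\<Sum>m\<in>UNIV. pd i (\<lambda>y. ext0 t y $ i $ m) w * w $ m) + t w $ i $ i) = 0"
    by simp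
  moreover have "(\<Sum>m\<in>UNIV. w $ m * vdiv (\<lambda>y. column m (ext0 t y)) w)
      = (\<Sum>i\<in>UNIV. \<Sum>m\<in>UNIV. pd i (\<lambda>y. ext0 t y $ i $ m) w * w $ m)"
    unfolding vdiv_def column_def by (subst sum.swap) (simp add: sum_distrib_left ac_simps)
  ultimately show ?thesis
    by (simp add: sum.distrib tr3_def eq_neg_iff_add_eq_0)
qed

lemma sdiv2_eq_vdiv:
  assumes t: "tangent2 t" and w: "on_sphere w" and tr: "tr3 (t w) = 0"
    and dt: "ext0 t differentiable (at w)"
  shows "sdiv2 t w $ j = vdiv (\<lambda>y. column j (ext0 t y)) w"
proof -
  have "(\<Sum>i\<in>UNIV. \<Sum>k\<in>UNIV. proj w i k * pd k (\<lambda>y. ext0 t y $ i $ m) w)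
      = vdiv (\<lambda>y. column m (ext0 t y)) w" for m
  proof -
    have "(\<lambda>y. ext0 t y $ i $ m) differentiable (at w)" for i
      using dt by (simp add: differentiable_vec_iff)
    moreover have "zero_homogeneous (\<lambda>y. ext0 t y $ i $ m)" for i
      by (rule zero_homogeneous_comp[OF zero_homogeneous_ext0])
    ultimately show ?thesis
      by (simp add: sum_proj_pd_zero_homogeneous vdiv_def column_def)
  qed
  then have "sdiv2 t w $ j = (\<Sum>m\<in>UNIV. proj w j m * vdiv (\<lambda>y. column m (ext0 t y)) w)"
    by (simp add: sdiv2_def)
  also have "\<dots> = vdiv (\<lambda>y. column j (ext0 t y)) w"
    using normal_vdiv_columns_tangent2[OF t w dt] tr by (simp add: sum_proj_mult)
  finally show ?thesis .
qed

lemma tangent1_sdiv2: "tangent1 (sdiv2 t)"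
  unfolding tangent1_def
proof (intro allI impI)
  fix w :: "real^3" assume "on_sphere w"
  moreover have "(\<Sum>j\<in>UNIV. w $ j * w $ j) = (norm w)\<^sup>2"
    by (simp add: power2_norm_eq_inner inner_vec_def)
  ultimately have ww: "(\<Sum>j\<in>UNIV. w $ j * w $ j) = 1"
    by (simp add: on_sphere_def)
  have P: "(\<Sum>j\<in>UNIV. proj w j m * w $ j) = 0" for m
    using sum_proj_mult[of w m "\<lambda>j. w $ j"] ww by (simp add: proj_sym)
  define X where "X m = (\<Sum>i\<in>UNIV. \<Sum>k\<in>UNIV. proj w i k * pd k (\<lambda>y. ext0 t y $ i $ m) w)" for m
  have "sdiv2 t w \<bullet> w = (\<Sum>j\<in>UNIV. \<Sum>m\<in>UNIV. proj w j m * X m * w $ j)"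
    by (simp add: sdiv2_def inner_vec_def sum_distrib_right X_def)
  also have "\<dots> = (\<Sum>m\<in>UNIV. X m * (\<Sum>j\<in>UNIV. proj w j m * w $ j))"
    by (subst sum.swap) (simp add: sum_distrib_left ac_simps)
  finally show "sdiv2 t w \<bullet> w = 0"
    by (simp add: P)
qed

lemma vdiv_ext0:
  assumes "x \<noteq> 0" "ext0 a differentiable (at (x /\<^sub>R norm x))"
  shows "vdiv (ext0 a) x = sdiv1 a (x /\<^sub>R norm x) / norm x"
  using vdiv_zero_homogeneous_scale[OF zero_homogeneous_ext0 assms(2), of "norm x"] assms
  by (simp add: sdiv1_eq_vdiv)

lemma vdiv_ext0_column:
  assumes "x \<noteq> 0" "tangent2 t" "tr3 (t (x /\<^sub>R norm x)) = 0"
    and "ext0 t differentiable (at (x /\<^sub>R norm x))"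
  shows "vdiv (\<lambda>y. column j (ext0 t y)) x = sdiv2 t (x /\<^sub>R norm x) $ j / norm x"
proof -
  let ?w = "x /\<^sub>R norm x"
  have "(\<lambda>y. column j (ext0 t y)) differentiable (at ?w)"
    using assms(4) by (simp add: differentiable_vec_iff column_def)
  then have "vdiv (\<lambda>y. column j (ext0 t y)) (norm x *\<^sub>R ?w) = vdiv (\<lambda>y. column j (ext0 t y)) ?w / norm x"
    using assms(1) zero_homogeneous_comp[OF zero_homogeneous_ext0, of "column j" t]
    by (intro vdiv_zero_homogeneous_scale) auto
  moreover have "on_sphere ?w" using assms(1) by (simp add: on_sphere_def)
  ultimately show ?thesis
    using assms by (simp add: sdiv2_eq_vdiv)
qed

lemma smooth1_differentiable:
  assumes "smooth1 S f" "open S" "s \<in> S"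
  shows "f differentiable (at s)" and "deriv f differentiable (at s)"
proof -
  have "((deriv ^^ 0) f) differentiable_on S" "((deriv ^^ 1) f) differentiable_on S"
    using assms(1) unfolding smooth1_def by blast+
  then show "f differentiable (at s)" "deriv f differentiable (at s)"
    using assms(2,3) by (auto simp: differentiable_on_eq_differentiable_at)
qed

lemma smooth3_differentiable:
  assumes "smooth3 U f" "open U" "y \<in> U"
  shows "f differentiable (at y)" and "pd k f differentiable (at y)"
proof -
  have "f \<in> partials_of f" "pd k f \<in> partials_of f"
    by (auto intro: partials_of.intros)
  then show "f differentiable (at y)" "pd k f differentiable (at y)"
    using assms unfolding smooth3_def by (auto simp: differentiable_on_eq_differentiable_at)
qed

lemma oneform_S2_differentiable:
  assumes "oneform_S2 a" "y \<noteq> 0"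
  shows "ext0 a differentiable (at y)"
  using assms unfolding oneform_S2_def smooth_S2_1_def differentiable_vec_iff
  by (auto intro: smooth3_differentiable(1)[OF _ open_Compl[OF closed_singleton]])

lemma tfs_S2_differentiable:
  assumes "tfs_S2 t" "y \<noteq> 0"
  shows "ext0 t differentiable (at y)"
  using assms unfolding tfs_S2_def smooth_S2_2_def differentiable_vec_iff
  by (auto intro: smooth3_differentiable(1)[OF _ open_Compl[OF closed_singleton]])

lemma ext0_differentiable:
  assumes "f differentiable (at (y /\<^sub>R norm y))" "y \<noteq> 0"
  shows "ext0 f differentiable (at y)"
proof -
  have "(\<lambda>z. z /\<^sub>R norm z) differentiable (at y)"
    using assms(2) by (auto intro!: derivative_intros)
  then show ?thesis
    unfolding ext0_def by (rule differentiable_compose[of f "\<lambda>z. z /\<^sub>R norm z", OF assms(1)])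
qed

lemma sdiv1_differentiable:
  assumes "oneform_S2 a" "u \<noteq> 0"
  shows "sdiv1 a differentiable (at u)"
proof -
  have "pd k (\<lambda>y. ext0 a y $ l) differentiable (at u)" for k l
    using assms unfolding oneform_S2_def smooth_S2_1_def
    by (auto intro: smooth3_differentiable(2)[OF _ open_Compl[OF closed_singleton]])
  then show ?thesis
    unfolding sdiv1_def[abs_def] proj_def
    by (intro differentiable_sum ballI finite_UNIV differentiable_mult differentiable_diff) auto
qed

lemma sdiv2_differentiable:
  assumes "tfs_S2 t" "u \<noteq> 0"
  shows "sdiv2 t differentiable (at u)"
proof -
  have "pd k (\<lambda>y. ext0 t y $ i $ m) differentiable (at u)" for k i m
    using assms unfolding tfs_S2_def smooth_S2_2_def
    by (auto intro: smooth3_differentiable(2)[OF _ open_Compl[OF closed_singleton]])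
  then show ?thesis
    unfolding sdiv2_def[abs_def] proj_def differentiable_vec_iff
    by (intro allI differentiable_sum ballI finite_UNIV differentiable_mult differentiable_diff) auto
qed

subsection \<open>The divergence of \<open>2 q \<alpha> \<odot> dr + Q \<tau>\<close>\<close>

lemma deriv_divide_power:
  fixes q :: "real \<Rightarrow> real"
  assumes "q differentiable (at r)" "r \<noteq> 0"
  shows "deriv (\<lambda>s. q s / s ^ n) r = deriv q r / r ^ n - n * q r / r ^ Suc n"
    and "(\<lambda>s. q s / s ^ n) differentiable (at r)"
proof -
  have "((\<lambda>s. q s / s ^ n) has_real_derivative
      (deriv q r * r ^ n - q r * (n * r ^ (n - 1))) / (r ^ n * r ^ n)) (at r)"
    using assms DERIV_deriv_iff_real_differentiable[of q r]
    by (auto intro!: derivative_eq_intros)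
  moreover have "(deriv q r * r ^ n - q r * (n * r ^ (n - 1))) / (r ^ n * r ^ n)
      = deriv q r / r ^ n - n * q r / r ^ Suc n"
    using assms(2) by (cases n) (simp_all add: field_simps)
  ultimately show "deriv (\<lambda>s. q s / s ^ n) r = deriv q r / r ^ n - n * q r / r ^ Suc n"
    and "(\<lambda>s. q s / s ^ n) differentiable (at r)"
    by (auto simp: DERIV_imp_deriv real_differentiable_def)
qed

lemma deriv_power_mult:
  fixes q :: "real \<Rightarrow> real"
  assumes "q differentiable (at r)"
  shows "deriv (\<lambda>s. s ^ n * q s) r = n * r ^ (n - 1) * q r + r ^ n * deriv q r"
  using assms DERIV_deriv_iff_real_differentiable[of q r]
  by (intro DERIV_imp_deriv) (auto intro!: derivative_eq_intros)

lemma mk_tensor_component: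
  "mk_tensor q a Q t y $ i $ j
    = q (norm y) / (norm y)\<^sup>2 * (ext0 a y $ i * y $ j + ext0 a y $ j * y $ i)
      + Q (norm y) / (norm y)\<^sup>2 * ext0 t y $ i $ j"
  unfolding mk_tensor_def odot_def pb1_def pb2_def dr_def ext0_def
  by (cases "y = 0") (simp_all add: field_simps power2_eq_square)

lemma column_mk_tensor:
  "column j (mk_tensor q a Q t y)
    = (q (norm y) / (norm y)\<^sup>2) *\<^sub>R (y $ j *\<^sub>R ext0 a y + ext0 a y $ j *\<^sub>R y)
      + (Q (norm y) / (norm y)\<^sup>2) *\<^sub>R column j (ext0 t y)"
  by (simp add: vec_eq_iff column_def mk_tensor_component algebra_simps)

lemma mk_tensor_symmetric_trace_free:
  assumes a: "tangent1 a" and t: "\<And>w. on_sphere w \<Longrightarrow> symmetric3 (t w) \<and> tr3 (t w) = 0"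
    and y: "y \<noteq> 0"
  shows "symmetric3 (mk_tensor q a Q t y) \<and> tr3 (mk_tensor q a Q t y) = 0"
proof -
  have w: "on_sphere (y /\<^sub>R norm y)" using y by (simp add: on_sphere_def)
  then have sym: "ext0 t y $ i $ j = ext0 t y $ j $ i" for i j
    using t by (simp add: ext0_def symmetric3_def)
  have "tr3 (mk_tensor q a Q t y)
      = 2 * (q (norm y) / (norm y)\<^sup>2) * (ext0 a y \<bullet> y) + Q (norm y) / (norm y)\<^sup>2 * tr3 (ext0 t y)"
    by (simp add: tr3_def mk_tensor_component inner_vec_def sum.distrib sum_distrib_left
        sum_divide_distrib algebra_simps)
  also have "\<dots> = 0"
    using tangent1_ext0_inner[OF a y] t[OF w] by (simp add: ext0_def)
  finally show ?thesis
    by (simp add: symmetric3_def mk_tensor_component sym algebra_simps)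
qed

lemma vdiv_odot_position:
  assumes "zero_homogeneous V" "V differentiable (at x)"
  shows "vdiv (\<lambda>y. y $ j *\<^sub>R V y + V y $ j *\<^sub>R y) x = 4 * V x $ j + x $ j * vdiv V x"
proof -
  have "(\<lambda>y. V y $ j) differentiable (at x)"
    using assms(2) by (simp add: differentiable_vec_iff)
  moreover have "zero_homogeneous (\<lambda>y. V y $ j)"
    by (rule zero_homogeneous_comp[OF assms(1)])
  ultimately have "(\<Sum>i\<in>UNIV. pd i (\<lambda>y. V y $ j) x * x $ i) = 0"
    using zero_homogeneous_euler by (simp add: mult.commute)
  with assms(2) \<open>(\<lambda>y. V y $ j) differentiable (at x)\<close> show ?thesis
    by (simp add: vdiv_add vdiv_scaleR pd_coord of_bool_def[symmetric])
qed

lemma div_euc_mk_tensor: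
  fixes q Q :: "real \<Rightarrow> real"
  assumes x: "x \<noteq> 0"
    and dq: "q differentiable (at (norm x))" and dQ: "Q differentiable (at (norm x))"
    and a: "tangent1 a" and da: "ext0 a differentiable (at (x /\<^sub>R norm x))"
    and t: "tangent2 t" and tr: "tr3 (t (x /\<^sub>R norm x)) = 0"
    and dt: "ext0 t differentiable (at (x /\<^sub>R norm x))"
  shows "div_euc (mk_tensor q a Q t) x
    = (deriv (\<lambda>s. s\<^sup>2 * q s) (norm x) / norm x ^ 3) *\<^sub>R a (x /\<^sub>R norm x)
      + (q (norm x) / (norm x)\<^sup>2 * sdiv1 a (x /\<^sub>R norm x)) *\<^sub>R (x /\<^sub>R norm x)
      + (Q (norm x) / norm x ^ 3) *\<^sub>R sdiv2 t (x /\<^sub>R norm x)"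
    (is "_ = ?rhs")
proof (subst vec_eq_iff, intro allI)
  fix j
  let ?r = "norm x" and ?w = "x /\<^sub>R norm x"
  let ?F = "\<lambda>s. q s / s\<^sup>2" and ?G = "\<lambda>s. Q s / s\<^sup>2"
  let ?P = "\<lambda>y. y $ j *\<^sub>R ext0 a y + ext0 a y $ j *\<^sub>R y" and ?B = "\<lambda>y. column j (ext0 t y)"
  have r: "?r > 0" using x by simp
  note dA = ext0_differentiable_from_sphere[OF da x]
  have dP: "?P differentiable (at x)"
    using dA by (simp add: differentiable_vec_iff)
  have dB: "?B differentiable (at x)"
    using ext0_differentiable_from_sphere[OF dt x] by (simp add: differentiable_vec_iff column_def)
  have "?r \<noteq> 0" using r by simp
  note F = deriv_divide_power[OF dq this, of 2] and G = deriv_divide_power[OF dQ this, of 2]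
  have "div_euc (mk_tensor q a Q t) x $ j
      = vdiv (\<lambda>y. ?F (norm y) *\<^sub>R ?P y + ?G (norm y) *\<^sub>R ?B y) x"
    by (simp add: div_euc_eq_vdiv_column column_mk_tensor)
  also have "\<dots> = vdiv (\<lambda>y. ?F (norm y) *\<^sub>R ?P y) x + vdiv (\<lambda>y. ?G (norm y) *\<^sub>R ?B y) x"
    using F(2) G(2) x dP dB by (intro vdiv_add) (auto intro!: differentiable_scaleR pd_radial(2))
  also have "\<dots> = deriv ?F ?r * (?P x \<bullet> x) / ?r + ?F ?r * vdiv ?P x
      + (deriv ?G ?r * (?B x \<bullet> x) / ?r + ?G ?r * vdiv ?B x)"
    using vdiv_radial_scaleR[OF F(2) x dP] vdiv_radial_scaleR[OF G(2) x dB] x by simp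
  also have "\<dots> = deriv ?F ?r * ext0 a x $ j * ?r + ?F ?r * (4 * ext0 a x $ j + x $ j * (sdiv1 a ?w / ?r))
      + ?G ?r * (sdiv2 t ?w $ j / ?r)"
    using dA x a t tr da dt
    by (simp add: vdiv_odot_position zero_homogeneous_ext0 vdiv_ext0 vdiv_ext0_column
        tangent1_ext0_inner tangent2_ext0_column inner_add_left dot_square_norm power2_eq_square)
  also have "\<dots> = ?rhs $ j"
    unfolding F(1) deriv_power_mult[OF dq] using r
    by (simp add: ext0_def field_simps power2_eq_square power3_eq_cube)
  finally show "div_euc (mk_tensor q a Q t) x $ j = ?rhs $ j" .
qed

lemma orthogonal_add_scaleR_eq_0_iff:
  fixes u w :: "'a::real_inner"
  assumes "u \<bullet> w = 0" "w \<bullet> w = 1"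
  shows "u + c *\<^sub>R w = 0 \<longleftrightarrow> u = 0 \<and> c = 0"
proof
  assume sum0: "u + c *\<^sub>R w = 0"
  have "(u + c *\<^sub>R w) \<bullet> w = c"
    using assms by (simp add: inner_add_left)
  with sum0 have "c = 0" by simp
  with sum0 show "u = 0 \<and> c = 0" by simp
qed simp

lemma div_euc_mk_tensor_eq_0_iff:
  fixes q Q :: "real \<Rightarrow> real"
  assumes x: "x \<noteq> 0"
    and dq: "q differentiable (at (norm x))" and dQ: "Q differentiable (at (norm x))"
    and a: "tangent1 a" and da: "ext0 a differentiable (at (x /\<^sub>R norm x))"
    and t: "tangent2 t" and tr: "tr3 (t (x /\<^sub>R norm x)) = 0"
    and dt: "ext0 t differentiable (at (x /\<^sub>R norm x))"
  shows "div_euc (mk_tensor q a Q t) x = 0 \<longleftrightarrow>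
    q (norm x) * sdiv1 a (x /\<^sub>R norm x) = 0 \<and>
    deriv (\<lambda>s. s\<^sup>2 * q s) (norm x) *\<^sub>R a (x /\<^sub>R norm x) + Q (norm x) *\<^sub>R sdiv2 t (x /\<^sub>R norm x) = 0"
proof -
  let ?r = "norm x" and ?w = "x /\<^sub>R norm x"
  let ?U = "deriv (\<lambda>s. s\<^sup>2 * q s) ?r *\<^sub>R a ?w + Q ?r *\<^sub>R sdiv2 t ?w"
  have r: "?r > 0" using x by simp
  have "on_sphere ?w" using x by (simp add: on_sphere_def)
  then have "a ?w \<bullet> ?w = 0" "sdiv2 t ?w \<bullet> ?w = 0"
    using a tangent1_sdiv2[of t] unfolding tangent1_def by blast+
  then have "((1 / ?r ^ 3) *\<^sub>R ?U) \<bullet> ?w = 0"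
    by (auto simp: inner_add_left)
  moreover have "?w \<bullet> ?w = 1"
    using x by (simp add: dot_square_norm)
  moreover have "div_euc (mk_tensor q a Q t) x
      = (1 / ?r ^ 3) *\<^sub>R ?U + (q ?r / ?r\<^sup>2 * sdiv1 a ?w) *\<^sub>R ?w"
    by (simp add: div_euc_mk_tensor[OF assms] scaleR_add_right divide_inverse mult.commute)
  ultimately have "div_euc (mk_tensor q a Q t) x = 0
      \<longleftrightarrow> (1 / ?r ^ 3) *\<^sub>R ?U = 0 \<and> q ?r / ?r\<^sup>2 * sdiv1 a ?w = 0"
    by (simp only: orthogonal_add_scaleR_eq_0_iff)
  then show ?thesis
    using r by auto
qed

lemma differentiable_eventually_cong:
  assumes "\<forall>\<^sub>F y in nhds x. f y = g y" "g differentiable (at x)"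
  shows "f differentiable (at x)"
proof -
  obtain S where S: "open S" "x \<in> S" "\<And>y. y \<in> S \<Longrightarrow> f y = g y"
    using assms(1) unfolding eventually_nhds by blast
  obtain g' where "(g has_derivative g') (at x)"
    using assms(2) unfolding differentiable_def by blast
  then have "(f has_derivative g') (at x)"
    by (rule has_derivative_transform_within_open[OF _ S(1,2)]) (simp add: S(3))
  then show ?thesis unfolding differentiable_def by blast
qed

definition partials_differentiable_at :: "(real^3 \<Rightarrow> real) \<Rightarrow> real^3 \<Rightarrow> bool" where
  "partials_differentiable_at f x \<longleftrightarrow>
     (\<forall>\<^sub>F y in nhds x. f differentiable (at y)) \<and> (\<forall>k. pd k f differentiable (at x))"

lemma partials_differentiable_at_add:
  assumes "partials_differentiable_at f x" "partials_differentiable_at g x"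
  shows "partials_differentiable_at (\<lambda>y. f y + g y) x"
proof -
  have ev: "\<forall>\<^sub>F y in nhds x. f differentiable (at y) \<and> g differentiable (at y)"
    using assms by (simp add: partials_differentiable_at_def eventually_conj)
  then have "\<forall>\<^sub>F y in nhds x. pd k (\<lambda>y. f y + g y) y = pd k f y + pd k g y" for k
    by eventually_elim (simp add: pd_add)
  moreover have "(\<lambda>y. pd k f y + pd k g y) differentiable (at x)" for k
    using assms by (simp add: partials_differentiable_at_def)
  ultimately have "pd k (\<lambda>y. f y + g y) differentiable (at x)" for k
    by (rule differentiable_eventually_cong)
  then show ?thesis
    using ev unfolding partials_differentiable_at_def by (auto elim!: eventually_mono)
qed

lemma partials_differentiable_at_mult:
  assumes "partials_differentiable_at f x" "partials_differentiable_at g x"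
  shows "partials_differentiable_at (\<lambda>y. f y * g y) x"
proof -
  have ev: "\<forall>\<^sub>F y in nhds x. f differentiable (at y) \<and> g differentiable (at y)"
    using assms by (simp add: partials_differentiable_at_def eventually_conj)
  then have "\<forall>\<^sub>F y in nhds x. pd k (\<lambda>y. f y * g y) y = pd k f y * g y + f y * pd k g y" for k
    by eventually_elim (simp add: pd_mult)
  moreover have "(\<lambda>y. pd k f y * g y + f y * pd k g y) differentiable (at x)" for k
    using assms ev[THEN eventually_nhds_x_imp_x] by (simp add: partials_differentiable_at_def)
  ultimately have "pd k (\<lambda>y. f y * g y) differentiable (at x)" for k
    by (rule differentiable_eventually_cong)
  then show ?thesis
    using ev unfolding partials_differentiable_at_def by (auto elim!: eventually_mono)
qed

lemma partials_differentiable_at_coord: "partials_differentiable_at (\<lambda>y. y $ j) x"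
proof -
  have "pd k (\<lambda>y. y $ j) = (\<lambda>_. if k = j then 1 else 0)" for k
    by (simp add: fun_eq_iff pd_coord)
  then show ?thesis by (simp add: partials_differentiable_at_def)
qed

lemma partials_differentiable_at_smooth3:
  assumes "smooth3 U f" "open U" "x \<in> U"
  shows "partials_differentiable_at f x"
proof -
  have "\<forall>\<^sub>F y in nhds x. y \<in> U"
    by (rule eventually_nhds_in_open[OF assms(2,3)])
  then have "\<forall>\<^sub>F y in nhds x. f differentiable (at y)"
    by eventually_elim (rule smooth3_differentiable(1)[OF assms(1,2)])
  then show ?thesis
    using smooth3_differentiable(2)[OF assms] by (simp add: partials_differentiable_at_def)
qed

lemma partials_differentiable_at_radial:
  fixes f :: "real \<Rightarrow> real"
  assumes ev: "\<forall>\<^sub>F s in nhds (norm x). f differentiable (at s)"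
    and d2: "deriv f differentiable (at (norm x))" and x: "x \<noteq> 0"
  shows "partials_differentiable_at (\<lambda>y. f (norm y)) x"
proof -
  have "\<forall>\<^sub>F y in nhds x. f differentiable (at (norm y))"
    using ev by (rule eventually_compose_filterlim) (intro tendsto_norm filterlim_ident)
  then have ev': "\<forall>\<^sub>F y in nhds x. y \<noteq> 0 \<and> f differentiable (at (norm y))"
    using t1_space_nhds[OF x] by (simp add: eventually_conj_iff)
  then have "\<forall>\<^sub>F y in nhds x. pd k (\<lambda>y. f (norm y)) y = deriv f (norm y) * y $ k / norm y" for k
    by eventually_elim (simp add: pd_radial)
  moreover have "(\<lambda>y. deriv f (norm y) * y $ k / norm y) differentiable (at x)" for k
    using d2 x by (auto intro!: differentiable_compose[of "deriv f"] differentiable_mult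
        differentiable_divide)
  ultimately have "pd k (\<lambda>y. f (norm y)) differentiable (at x)" for k
    by (rule differentiable_eventually_cong)
  then show ?thesis
    using ev' unfolding partials_differentiable_at_def by (auto elim!: eventually_mono pd_radial(2))
qed

lemma Lop_eq_vdiv_div_euc:
  assumes d: "\<And>i j. partials_differentiable_at (\<lambda>y. S y $ i $ j) x"
    and tr: "\<forall>\<^sub>F y in nhds x. tr3 (S y) = 0"
  shows "Lop S x = vdiv (div_euc S) x"
proof -
  have dS: "\<forall>\<^sub>F y in nhds x. \<forall>i j. (\<lambda>y. S y $ i $ j) differentiable (at y)"
    using d by (simp add: partials_differentiable_at_def eventually_all_finite)
  have dpd: "pd k (\<lambda>y. S y $ i $ j) differentiable (at x)" for k i j
    using d by (simp add: partials_differentiable_at_def)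
  have div: "(\<Sum>i\<in>UNIV. pd j (pd i (\<lambda>y. S y $ i $ j)) x) = pd j (\<lambda>y. div_euc S y $ j) x" for j
    using dpd by (simp add: div_euc_def pd_sum)
  have "\<forall>\<^sub>F y in nhds x. \<forall>\<^sub>F z in nhds y. tr3 (S z) = 0"
    using tr by (simp only: eventually_eventually)
  then have "\<forall>\<^sub>F y in nhds x. (\<Sum>i\<in>UNIV. pd j (\<lambda>y. S y $ i $ i) y) = 0" for j
    using dS
  proof eventually_elim
    case (elim y)
    then have "(\<Sum>i\<in>UNIV. pd j (\<lambda>y. S y $ i $ i) y) = pd j (\<lambda>y. tr3 (S y)) y"
      by (simp add: tr3_def pd_sum)
    also have "\<dots> = 0"
      using elim by (simp add: pd_eventually_cong[where g="\<lambda>_. 0"])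
    finally show ?case .
  qed
  then have trace: "(\<Sum>i\<in>UNIV. pd j (pd j (\<lambda>y. S y $ i $ i)) x) = 0" for j
    using dpd by (simp add: pd_sum[symmetric] pd_eventually_cong[where g="\<lambda>_. 0"])
  have "Lop S x = (\<Sum>j\<in>UNIV. \<Sum>i\<in>UNIV. pd j (pd i (\<lambda>y. S y $ i $ j)) x)
      - (\<Sum>j\<in>UNIV. \<Sum>i\<in>UNIV. pd j (pd j (\<lambda>y. S y $ i $ i)) x)"
    unfolding Lop_def sum_subtractf
    by (subst (1 2) sum.swap) (rule refl)
  also have "\<dots> = vdiv (div_euc S) x"
    by (simp add: div trace vdiv_def)
  finally show ?thesis .
qed

lemma differentiable_deriv_divide_power:
  fixes p :: "real \<Rightarrow> real"
  assumes ev: "\<forall>\<^sub>F s in nhds r. p differentiable (at s)"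
    and d2: "deriv p differentiable (at r)" and r: "r \<noteq> 0"
  shows "deriv (\<lambda>s. p s / s ^ n) differentiable (at r)"
proof (rule differentiable_eventually_cong)
  show "\<forall>\<^sub>F s in nhds r. deriv (\<lambda>s. p s / s ^ n) s = deriv p s / s ^ n - n * p s / s ^ Suc n"
    using ev t1_space_nhds[OF r] by eventually_elim (simp add: deriv_divide_power)
  show "(\<lambda>s. deriv p s / s ^ n - n * p s / s ^ Suc n) differentiable (at r)"
    using d2 r ev[THEN eventually_nhds_x_imp_x] by (auto intro!: derivative_intros)
qed

lemma partials_differentiable_at_radial_divide_power:
  fixes p :: "real \<Rightarrow> real"
  assumes ev: "\<forall>\<^sub>F s in nhds (norm x). p differentiable (at s)"
    and d2: "deriv p differentiable (at (norm x))" and x: "x \<noteq> 0"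
  shows "partials_differentiable_at (\<lambda>y. p (norm y) / norm y ^ n) x"
proof (rule partials_differentiable_at_radial[of "\<lambda>s. p s / s ^ n", OF _ _ x])
  have "norm x \<noteq> 0" using x by simp
  show "\<forall>\<^sub>F s in nhds (norm x). (\<lambda>s. p s / s ^ n) differentiable (at s)"
    using ev t1_space_nhds[OF \<open>norm x \<noteq> 0\<close>]
    by eventually_elim (simp add: deriv_divide_power(2))
  show "deriv (\<lambda>s. p s / s ^ n) differentiable (at (norm x))"
    using ev d2 \<open>norm x \<noteq> 0\<close> by (rule differentiable_deriv_divide_power)
qed

lemma partials_differentiable_at_mk_tensor:
  fixes p P :: "real \<Rightarrow> real"
  assumes ev: "\<forall>\<^sub>F s in nhds (norm x). p differentiable (at s) \<and> P differentiable (at s)"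
    and dp: "deriv p differentiable (at (norm x))" and dP: "deriv P differentiable (at (norm x))"
    and x: "x \<noteq> 0" and a: "oneform_S2 a" and t: "tfs_S2 t"
  shows "partials_differentiable_at (\<lambda>y. mk_tensor p a P t y $ i $ j) x"
proof -
  have "partials_differentiable_at (\<lambda>y. ext0 a y $ l) x" for l
    using a x unfolding oneform_S2_def smooth_S2_1_def
    by (auto intro: partials_differentiable_at_smooth3[OF _ open_Compl[OF closed_singleton]])
  moreover have "partials_differentiable_at (\<lambda>y. ext0 t y $ i $ j) x"
    using t x unfolding tfs_S2_def smooth_S2_2_def
    by (auto intro: partials_differentiable_at_smooth3[OF _ open_Compl[OF closed_singleton]])
  moreover have "partials_differentiable_at (\<lambda>y. p (norm y) / (norm y)\<^sup>2) x"
    and "partials_differentiable_at (\<lambda>y. P (norm y) / (norm y)\<^sup>2) x"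
    using ev dp dP x
    by (auto intro!: partials_differentiable_at_radial_divide_power elim: eventually_mono)
  ultimately show ?thesis
    unfolding mk_tensor_component
    by (intro partials_differentiable_at_add partials_differentiable_at_mult
        partials_differentiable_at_coord)
qed

subsection \<open>The linearized scalar curvature of \<open>2 p \<eta> \<odot> dr + P \<sigma>\<close>\<close>

lemma vdiv_polar_field:
  fixes H K M :: "real \<Rightarrow> real" and f :: "real^3 \<Rightarrow> real"
  assumes x: "x \<noteq> 0"
    and dH: "H differentiable (at (norm x))" and dK: "K differentiable (at (norm x))"
    and dM: "M differentiable (at (norm x))"
    and a: "tangent1 a" "ext0 a differentiable (at (x /\<^sub>R norm x))"
    and f: "ext0 f differentiable (at (x /\<^sub>R norm x))"
    and c: "tangent1 c" "ext0 c differentiable (at (x /\<^sub>R norm x))"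
  shows "vdiv (\<lambda>y. H (norm y) *\<^sub>R ext0 a y + K (norm y) *\<^sub>R (ext0 f y *\<^sub>R y) + M (norm y) *\<^sub>R ext0 c y) x
    = H (norm x) * sdiv1 a (x /\<^sub>R norm x) / norm x
      + (norm x * deriv K (norm x) + 3 * K (norm x)) * f (x /\<^sub>R norm x)
      + M (norm x) * sdiv1 c (x /\<^sub>R norm x) / norm x"
proof -
  let ?w = "x /\<^sub>R norm x"
  note dA = ext0_differentiable_from_sphere[OF a(2) x]
    and dC = ext0_differentiable_from_sphere[OF c(2) x]
    and dF = ext0_differentiable_from_sphere[OF f x]
  have dFx: "(\<lambda>y. ext0 f y *\<^sub>R y) differentiable (at x)"
    using dF by simp
  define VA where "VA y = H (norm y) *\<^sub>R ext0 a y" for y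
  define VF where "VF y = K (norm y) *\<^sub>R (ext0 f y *\<^sub>R y)" for y
  define VC where "VC y = M (norm y) *\<^sub>R ext0 c y" for y
  have "VA differentiable (at x)" "VF differentiable (at x)" "VC differentiable (at x)"
    unfolding VA_def VF_def VC_def
    using dA dC dF pd_radial(2)[OF dH x] pd_radial(2)[OF dK x] pd_radial(2)[OF dM x]
    by simp_all
  then have "vdiv (\<lambda>y. VA y + VF y + VC y) x = vdiv VA x + vdiv VF x + vdiv VC x"
    by (simp add: vdiv_add)
  then have "vdiv (\<lambda>y. H (norm y) *\<^sub>R ext0 a y + K (norm y) *\<^sub>R (ext0 f y *\<^sub>R y) + M (norm y) *\<^sub>R ext0 c y) x
      = vdiv (\<lambda>y. H (norm y) *\<^sub>R ext0 a y) x + vdiv (\<lambda>y. K (norm y) *\<^sub>R (ext0 f y *\<^sub>R y)) x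
        + vdiv (\<lambda>y. M (norm y) *\<^sub>R ext0 c y) x"
    by (simp only: VA_def[abs_def] VF_def[abs_def] VC_def[abs_def])
  also have "\<dots> = H (norm x) * vdiv (ext0 a) x
      + (deriv K (norm x) * (ext0 f x * (x \<bullet> x)) / norm x + K (norm x) * (3 * ext0 f x))
      + M (norm x) * vdiv (ext0 c) x"
    using vdiv_radial_scaleR[OF dH x dA] vdiv_radial_scaleR[OF dK x dFx]
      vdiv_radial_scaleR[OF dM x dC] tangent1_ext0_inner[OF a(1) x] tangent1_ext0_inner[OF c(1) x]
      vdiv_zero_homogeneous_scaleR_id[OF zero_homogeneous_ext0 dF]
    by simp
  also have "\<dots> = H (norm x) * sdiv1 a ?w / norm x
      + (norm x * deriv K (norm x) + 3 * K (norm x)) * f ?w + M (norm x) * sdiv1 c ?w / norm x"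
    using x a(2) c(2) by (simp add: vdiv_ext0 dot_square_norm ext0_def power2_eq_square algebra_simps)
  finally show ?thesis .
qed

lemma div_euc_mk_tensor_polar:
  fixes p P :: "real \<Rightarrow> real"
  assumes y: "y \<noteq> 0"
    and dp: "p differentiable (at (norm y))" and dP: "P differentiable (at (norm y))"
    and a: "oneform_S2 a" and t: "tfs_S2 t"
  shows "div_euc (mk_tensor p a P t) y
    = ((2 * norm y * p (norm y) + (norm y)\<^sup>2 * deriv p (norm y)) / norm y ^ 3) *\<^sub>R ext0 a y
      + (p (norm y) / norm y ^ 3) *\<^sub>R (ext0 (sdiv1 a) y *\<^sub>R y)
      + (P (norm y) / norm y ^ 3) *\<^sub>R ext0 (sdiv2 t) y"
proof -
  have "on_sphere (y /\<^sub>R norm y)" "y /\<^sub>R norm y \<noteq> 0"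
    using y by (simp_all add: on_sphere_def)
  then show ?thesis
    using y div_euc_mk_tensor[OF y dp dP, of a t] deriv_power_mult[OF dp, of 2] a t
      oneform_S2_differentiable[OF a] tfs_S2_differentiable[OF t]
    by (simp add: oneform_S2_def tfs_S2_def ext0_def vec_eq_iff field_simps power2_eq_square
        power3_eq_cube)
qed

lemma Lop_mk_tensor:
  fixes p P :: "real \<Rightarrow> real"
  assumes I: "open I" "norm x \<in> I" and x: "x \<noteq> 0"
    and hp: "smooth1 I p" and hP: "smooth1 I P"
    and a: "oneform_S2 a" and t: "tfs_S2 t"
  shows "Lop (mk_tensor p a P t) x
    = (2 * norm x * deriv (\<lambda>s. s * p s) (norm x) * sdiv1 a (x /\<^sub>R norm x)
       + P (norm x) * sdiv1 (sdiv2 t) (x /\<^sub>R norm x)) / norm x ^ 4"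
proof -
  let ?r = "norm x" and ?w = "x /\<^sub>R norm x"
  have r0: "?r \<noteq> 0" using x by simp
  have ta: "tangent1 a" and st: "\<And>w. on_sphere w \<Longrightarrow> symmetric3 (t w) \<and> tr3 (t w) = 0"
    using a t by (simp_all add: oneform_S2_def tfs_S2_def)
  have "\<forall>\<^sub>F y in nhds x. norm y \<in> I"
    using eventually_nhds_in_open[OF I] by (rule eventually_compose_filterlim)
      (intro tendsto_norm filterlim_ident)
  then have evI: "\<forall>\<^sub>F y in nhds x. y \<noteq> 0 \<and> norm y \<in> I"
    using t1_space_nhds[OF x] by (simp add: eventually_conj_iff)
  have evs: "\<forall>\<^sub>F s in nhds ?r. p differentiable (at s) \<and> P differentiable (at s)"
    using eventually_nhds_in_open[OF I]
    by eventually_elim (simp add: smooth1_differentiable(1)[OF hp I(1)] smooth1_differentiable(1)[OF hP I(1)])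
  have dp: "p differentiable (at ?r)" "deriv p differentiable (at ?r)"
    and dP: "P differentiable (at ?r)" "deriv P differentiable (at ?r)"
    using smooth1_differentiable[OF hp I] smooth1_differentiable[OF hP I] by auto
  define H where "H s = (2 * s * p s + s\<^sup>2 * deriv p s) / s ^ 3" for s
  define K where "K s = p s / s ^ 3" for s
  define M where "M s = P s / s ^ 3" for s
  have "Lop (mk_tensor p a P t) x = vdiv (div_euc (mk_tensor p a P t)) x"
  proof (rule Lop_eq_vdiv_div_euc)
    show "partials_differentiable_at (\<lambda>y. mk_tensor p a P t y $ i $ j) x" for i j
      using evs dp(2) dP(2) x a t by (rule partials_differentiable_at_mk_tensor)
    show "\<forall>\<^sub>F y in nhds x. tr3 (mk_tensor p a P t y) = 0"
      using evI by eventually_elim (simp add: mk_tensor_symmetric_trace_free[OF ta st])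
  qed
  also have "\<dots> = vdiv (\<lambda>y. H (norm y) *\<^sub>R ext0 a y + K (norm y) *\<^sub>R (ext0 (sdiv1 a) y *\<^sub>R y)
      + M (norm y) *\<^sub>R ext0 (sdiv2 t) y) x"
    using evI
    by (intro vdiv_eventually_cong, eventually_elim)
      (simp add: div_euc_mk_tensor_polar smooth1_differentiable(1)[OF hp I(1)]
        smooth1_differentiable(1)[OF hP I(1)] a t H_def K_def M_def)
  also have "\<dots> = H ?r * sdiv1 a ?w / ?r + (?r * deriv K ?r + 3 * K ?r) * sdiv1 a ?w
      + M ?r * sdiv1 (sdiv2 t) ?w / ?r"
  proof (rule vdiv_polar_field[OF x])
    show "H differentiable (at ?r)" "K differentiable (at ?r)" "M differentiable (at ?r)"
      using dp dP x unfolding H_def[abs_def] K_def[abs_def] M_def[abs_def]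
      by (auto intro!: derivative_intros)
    show "ext0 a differentiable (at ?w)"
      using x by (simp add: oneform_S2_differentiable[OF a])
    show "ext0 (sdiv1 a) differentiable (at ?w)"
      using ext0_differentiable[OF sdiv1_differentiable[OF a], of ?w] x by simp
    show "ext0 (sdiv2 t) differentiable (at ?w)"
      using ext0_differentiable[OF sdiv2_differentiable[OF t], of ?w] x by simp
  qed (use ta tangent1_sdiv2 in auto)
  also have "\<dots> = (2 * ?r * deriv (\<lambda>s. s * p s) ?r * sdiv1 a ?w + P ?r * sdiv1 (sdiv2 t) ?w) / ?r ^ 4"
    using deriv_power_mult[OF dp(1), of 1] x
    unfolding K_def deriv_divide_power(1)[OF dp(1) r0, of 3]
    by (simp add: H_def M_def field_simps power2_eq_square power3_eq_cube power4_eq_xxxx)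
  finally show ?thesis .
qed

lemma A1_iff: "x \<in> A1 \<longleftrightarrow> x \<noteq> 0 \<and> norm x \<in> {1<..<2}"
  by (auto simp: A1_def)

lemma div_free_mk_tensor_iff:
  fixes q Q :: "real \<Rightarrow> real"
  assumes hq: "smooth1 {1<..<2} q" and hQ: "smooth1 {1<..<2} Q"
    and a: "oneform_S2 a" and t: "tfs_S2 t"
    and q_nonzero: "\<exists>r\<in>{1<..<2}. q r \<noteq> 0"
  shows "(\<forall>x\<in>A1. div_euc (mk_tensor q a Q t) x = 0) \<longleftrightarrow>
    (\<forall>w. on_sphere w \<longrightarrow> sdiv1 a w = 0) \<and>
    (\<forall>x\<in>A1. deriv (\<lambda>s. s\<^sup>2 * q s) (norm x) *\<^sub>R a (x /\<^sub>R norm x)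
               + Q (norm x) *\<^sub>R sdiv2 t (x /\<^sub>R norm x) = 0)"
proof -
  have pointwise: "div_euc (mk_tensor q a Q t) x = 0 \<longleftrightarrow>
      q (norm x) * sdiv1 a (x /\<^sub>R norm x) = 0 \<and>
      deriv (\<lambda>s. s\<^sup>2 * q s) (norm x) *\<^sub>R a (x /\<^sub>R norm x) + Q (norm x) *\<^sub>R sdiv2 t (x /\<^sub>R norm x) = 0"
    if x: "x \<in> A1" for x
  proof (rule div_euc_mk_tensor_eq_0_iff)
    have "x \<noteq> 0" "x /\<^sub>R norm x \<noteq> 0" "on_sphere (x /\<^sub>R norm x)"
      using x by (simp_all add: A1_iff on_sphere_def)
    then show "x \<noteq> 0" "ext0 a differentiable (at (x /\<^sub>R norm x))"
      "ext0 t differentiable (at (x /\<^sub>R norm x))" "tr3 (t (x /\<^sub>R norm x)) = 0"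
      using oneform_S2_differentiable[OF a] tfs_S2_differentiable[OF t] t
      by (auto simp: tfs_S2_def)
    show "q differentiable (at (norm x))" "Q differentiable (at (norm x))"
      using x smooth1_differentiable(1)[OF hq] smooth1_differentiable(1)[OF hQ]
      by (auto simp: A1_iff)
  qed (use a t in \<open>simp_all add: oneform_S2_def tfs_S2_def\<close>)
  obtain r where r: "r \<in> {1<..<2}" "q r \<noteq> 0" using q_nonzero by blast
  have "sdiv1 a w = 0"
    if "on_sphere w" and div_free: "\<forall>x\<in>A1. div_euc (mk_tensor q a Q t) x = 0" for w
  proof -
    have "norm w = 1" using \<open>on_sphere w\<close> by (simp add: on_sphere_def)
    then have "r *\<^sub>R w \<in> A1" "norm (r *\<^sub>R w) = r" "(r *\<^sub>R w) /\<^sub>R norm (r *\<^sub>R w) = w"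
      using r by (auto simp: A1_iff)
    then show ?thesis
      using pointwise[of "r *\<^sub>R w"] div_free r(2) by simp
  qed
  then show ?thesis
    using pointwise by (auto simp: A1_iff on_sphere_def)
qed

theorem lemma2p1:
  fixes q Q p P :: "real \<Rightarrow> real"
    and alpha eta :: "real^3 \<Rightarrow> real^3"
    and tau sigma :: "real^3 \<Rightarrow> real^3^3"
  assumes hq: "smooth1 {1<..<2} q" and hQ: "smooth1 {1<..<2} Q"
    and hp: "smooth1 {1<..<2} p" and hP: "smooth1 {1<..<2} P"
    and halpha: "oneform_S2 alpha" and htau: "tfs_S2 tau"
    and heta: "oneform_S2 eta" and hsigma: "tfs_S2 sigma"
    and hq_nontriv: "\<exists>r\<in>{1<..<2}. q r \<noteq> 0"
  shows
    "(\<forall>x\<in>A1. symmetric3 (mk_tensor q alpha Q tau x) \<and> tr3 (mk_tensor q alpha Q tau x) = 0)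
     \<and> ((\<forall>x\<in>A1. div_euc (mk_tensor q alpha Q tau) x = 0) \<longleftrightarrow>
          ((\<forall>w. on_sphere w \<longrightarrow> sdiv1 alpha w = 0) \<and>
           (\<forall>x\<in>A1. deriv (\<lambda>s. s\<^sup>2 * q s) (norm x) *\<^sub>R alpha (x /\<^sub>R norm x)
                     + Q (norm x) *\<^sub>R sdiv2 tau (x /\<^sub>R norm x) = 0)))
     \<and> (\<forall>x\<in>A1. symmetric3 (mk_tensor p eta P sigma x) \<and> tr3 (mk_tensor p eta P sigma x) = 0)
     \<and> ((\<forall>x\<in>A1. 2 * norm x * deriv (\<lambda>s. s * p s) (norm x) * sdiv1 eta (x /\<^sub>R norm x)
                 + P (norm x) * sdiv1 (sdiv2 sigma) (x /\<^sub>R norm x) = 0)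
        \<longrightarrow> (\<forall>x\<in>A1. Lop (mk_tensor p eta P sigma) x = 0))"
proof -
  have "symmetric3 (mk_tensor q alpha Q tau x) \<and> tr3 (mk_tensor q alpha Q tau x) = 0"
    and "symmetric3 (mk_tensor p eta P sigma x) \<and> tr3 (mk_tensor p eta P sigma x) = 0"
    if "x \<in> A1" for x
    using that mk_tensor_symmetric_trace_free[of alpha tau x q Q]
      mk_tensor_symmetric_trace_free[of eta sigma x p P] halpha htau heta hsigma
    by (auto simp: A1_iff oneform_S2_def tfs_S2_def)
  moreover have "Lop (mk_tensor p eta P sigma) x
      = (2 * norm x * deriv (\<lambda>s. s * p s) (norm x) * sdiv1 eta (x /\<^sub>R norm x)
         + P (norm x) * sdiv1 (sdiv2 sigma) (x /\<^sub>R norm x)) / norm x ^ 4"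
    if "x \<in> A1" for x
    using that Lop_mk_tensor[OF _ _ _ hp hP heta hsigma] by (simp add: A1_iff)
  ultimately show ?thesis
    using div_free_mk_tensor_iff[OF hq hQ halpha htau hq_nontriv] by simp
qed

end
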